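(* Let $\breve f\colon\{0,\dots,n\}\to\mathbb{Q}$ and $\breve g\colon\{0,\dots,m\}\to\mathbb{Q}$ be convex, $\breve h$ their min-plus convolution, and $\delta\ge0$. For each $k\in\{0,\dots,n+m\}$ let $(i^+_k,k-i^+_k)\in P^+_\delta$ and $(i^-_k,k-i^-_k)\in P^-_\delta$ be the points of these paths on diagonal $k$. Then the set $R_\delta$ of $\delta$-relevant points is exactly the set of points $(i,k-i)$ with $k\in\{0,\dots,n+m\}$ and $i^-_k\le i\le i^+_k$ (i.e., the points on or below $P^+_\delta$ and on or above $P^-_\delta$).
   Context: Convex means $F(i)-F(i-1)\le F(i+1)-F(i)$ for all interior $i$. $\breve h(k)=\min_{i+j=k}\breve f(i)+\breve g(j)$. A point is a pair $(i,j)\in\{0,\dots,n\}\times\{0,\dots,m\}$ on diagonal $i+j$; it is $\delta$-relevant if $\breve f(i)+\breve g(j)\le\breve h(i+j)+\delta$. $P^+_\delta$ (resp. $P^-_\delta$) is the set of points $(i,k-i)$, $k\in\{0,\dots,n+m\}$, where $i$ is maximal (resp. minimal) such that $(i,k-i)$ is a $\delta$-relevant point. *)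

theory Defs
  imports Complex_Main
begin

definition convex_on_range :: "nat \<Rightarrow> (nat \<Rightarrow> rat) \<Rightarrow> bool" where
  "convex_on_range N F \<longleftrightarrow>
     (\<forall>i. 0 < i \<and> i < N \<longrightarrow> F i - F (i - 1) \<le> F (i + 1) - F i)"

definition minplus_conv :: "nat \<Rightarrow> nat \<Rightarrow> (nat \<Rightarrow> rat) \<Rightarrow> (nat \<Rightarrow> rat) \<Rightarrow> nat \<Rightarrow> rat" where
  "minplus_conv n m f g k = Min {f i + g j | i j. i \<le> n \<and> j \<le> m \<and> i + j = k}"

definition relevant_set :: "nat \<Rightarrow> nat \<Rightarrow> (nat \<Rightarrow> rat) \<Rightarrow> (nat \<Rightarrow> rat) \<Rightarrow> rat \<Rightarrow> (nat \<times> nat) set" where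
  "relevant_set n m f g \<delta> =
     {(i, j). i \<le> n \<and> j \<le> m \<and> f i + g j \<le> minplus_conv n m f g (i + j) + \<delta>}"

definition iplus :: "nat \<Rightarrow> nat \<Rightarrow> (nat \<Rightarrow> rat) \<Rightarrow> (nat \<Rightarrow> rat) \<Rightarrow> rat \<Rightarrow> nat \<Rightarrow> nat" where
  "iplus n m f g \<delta> k = Max {i. i \<le> k \<and> (i, k - i) \<in> relevant_set n m f g \<delta>}"

definition iminus :: "nat \<Rightarrow> nat \<Rightarrow> (nat \<Rightarrow> rat) \<Rightarrow> (nat \<Rightarrow> rat) \<Rightarrow> rat \<Rightarrow> nat \<Rightarrow> nat" where
  "iminus n m f g \<delta> k = Min {i. i \<le> k \<and> (i, k - i) \<in> relevant_set n m f g \<delta>}"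

end

theory Submission
  imports Defs
begin

text \<open>Along a diagonal \<open>i + j = k\<close> the cost \<open>f i + g (k - i)\<close> is again a convex sequence,
  because reversing the direction of \<open>g\<close> flips the sign of its (nondecreasing) differences.
  A convex sequence is quasiconvex: on an interval it is bounded by the larger of its
  endpoint values. Hence if the two extreme \<open>\<delta>\<close>-relevant points of a diagonal have cost at most
  \<open>h k + \<delta>\<close>, so does every point between them.\<close>

lemma convex_on_range_diff_mono:
  assumes "convex_on_range N F" "j \<le> j'" "j' < N"
  shows "F (j + 1) - F j \<le> F (j' + 1) - F j'"
  using assms(2,3)
proof (induction j' rule: dec_induct)
  case (step l)
  then have "F (Suc l) - F l \<le> F (Suc l + 1) - F (Suc l)"
    using assms(1) unfolding convex_on_range_def by (metis diff_Suc_1 zero_less_Suc)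
  with step show ?case by simp
qed simp

lemma le_of_steps_le:
  fixes p :: "nat \<Rightarrow> 'a :: order"
  assumes "\<And>j. i \<le> j \<Longrightarrow> j < b \<Longrightarrow> p j \<le> p (j + 1)" "i \<le> b"
  shows "p i \<le> p b"
  using assms(2,1)
  by (induction b rule: dec_induct) (auto intro: order.trans simp: less_Suc_eq)

lemma ge_of_steps_ge:
  fixes p :: "nat \<Rightarrow> 'a :: order"
  assumes "\<And>j. a \<le> j \<Longrightarrow> j < i \<Longrightarrow> p (j + 1) \<le> p j" "a \<le> i"
  shows "p i \<le> p a"
  using assms(2,1)
  by (induction i rule: dec_induct) (auto intro: order.trans simp: less_Suc_eq)

lemma le_max_endpoints_of_diff_mono:
  fixes p :: "nat \<Rightarrow> 'a :: linordered_ab_group_add"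
  assumes diff_mono: "\<And>j j'. a \<le> j \<Longrightarrow> j \<le> j' \<Longrightarrow> j' < b \<Longrightarrow> p (j + 1) - p j \<le> p (j' + 1) - p j'"
    and "a \<le> i" "i \<le> b"
  shows "p i \<le> max (p a) (p b)"
proof (cases "i = a")
  case False
  with assms(2) have i: "a < i" "i - 1 + 1 = i" by auto
  show ?thesis
  proof (cases "p i - p (i - 1) \<le> 0")
    case True
    have "p i \<le> p a"
    proof (rule ge_of_steps_ge[OF _ assms(2)])
      fix j assume "a \<le> j" "j < i"
      with diff_mono[of j "i - 1"] i assms(3) have "p (j + 1) - p j \<le> p i - p (i - 1)" by simp
      also note True
      finally show "p (j + 1) \<le> p j" by simp
    qed
    then show ?thesis by (rule max.coboundedI1)
  next
    case False
    have "p i \<le> p b"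
    proof (rule le_of_steps_le[OF _ assms(3)])
      fix j assume "i \<le> j" "j < b"
      from False have "0 \<le> p i - p (i - 1)" by simp
      also have "\<dots> \<le> p (j + 1) - p j"
        using diff_mono[of "i - 1" j] i \<open>i \<le> j\<close> \<open>j < b\<close> by simp
      finally show "p j \<le> p (j + 1)" by simp
    qed
    then show ?thesis by (rule max.coboundedI2)
  qed
qed simp

lemma minplus_conv_attained:
  assumes "k \<le> n + m"
  obtains i where "i \<le> n" "k - i \<le> m" "i \<le> k" "minplus_conv n m f g k = f i + g (k - i)"
proof -
  let ?S = "{f i + g j | i j. i \<le> n \<and> j \<le> m \<and> i + j = k}"
  have "?S \<subseteq> (\<lambda>(i, j). f i + g j) ` ({..n} \<times> {..m})" by auto
  then have "finite ?S" by (rule finite_subset) auto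
  moreover have "f (min n k) + g (k - min n k) \<in> ?S"
    using assms by (intro CollectI exI[of _ "min n k"] exI[of _ "k - min n k"]) auto
  ultimately have "Min ?S \<in> ?S" by (intro Min_in) auto
  then show ?thesis
    using that unfolding minplus_conv_def by auto
qed

lemma diagonal_cost_diff_mono:
  assumes "convex_on_range n f" "convex_on_range m g"
    and "a \<le> j" "j \<le> j'" "j' < b" "b \<le> n" "b \<le> k" "k - a \<le> m"
  shows "f (j + 1) + g (k - (j + 1)) - (f j + g (k - j))
           \<le> f (j' + 1) + g (k - (j' + 1)) - (f j' + g (k - j'))"
proof -
  have "f (j + 1) - f j \<le> f (j' + 1) - f j'"
    using convex_on_range_diff_mono[OF assms(1)] assms by simp
  moreover have "g (k - (j' + 1) + 1) - g (k - (j' + 1)) \<le> g (k - (j + 1) + 1) - g (k - (j + 1))"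
    using convex_on_range_diff_mono[OF assms(2), of "k - (j' + 1)" "k - (j + 1)"] assms by simp
  moreover have "k - (j' + 1) + 1 = k - j'" "k - (j + 1) + 1 = k - j"
    using assms by auto
  ultimately show ?thesis by simp
qed

lemma relevant_between_relevant:
  assumes "convex_on_range n f" "convex_on_range m g"
    and a: "(a, k - a) \<in> relevant_set n m f g \<delta>" "a \<le> k"
    and b: "(b, k - b) \<in> relevant_set n m f g \<delta>" "b \<le> k"
    and "a \<le> i" "i \<le> b"
  shows "(i, k - i) \<in> relevant_set n m f g \<delta>"
proof -
  define p where "p j = f j + g (k - j)" for j
  have "p i \<le> max (p a) (p b)"
  proof (rule le_max_endpoints_of_diff_mono[OF _ assms(7,8)])
    fix j j' assume "a \<le> j" "j \<le> j'" "j' < b"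
    then show "p (j + 1) - p j \<le> p (j' + 1) - p j'"
      unfolding p_def using diagonal_cost_diff_mono[OF assms(1,2)] a b
      by (simp add: relevant_set_def)
  qed
  with a b assms(7,8) show ?thesis
    unfolding relevant_set_def p_def by auto
qed

lemma relevant_diagonal_nonempty:
  assumes "\<delta> \<ge> 0" "k \<le> n + m"
  shows "{i. i \<le> k \<and> (i, k - i) \<in> relevant_set n m f g \<delta>} \<noteq> {}"
proof -
  obtain i where "i \<le> n" "k - i \<le> m" "i \<le> k" "minplus_conv n m f g k = f i + g (k - i)"
    using minplus_conv_attained[OF assms(2)] .
  with assms(1) show ?thesis unfolding relevant_set_def by auto
qed

lemma relevant_diagonal_iff:
  assumes "convex_on_range n f" "convex_on_range m g" "\<delta> \<ge> 0" "k \<le> n + m" "i \<le> k"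
  shows "(i, k - i) \<in> relevant_set n m f g \<delta> \<longleftrightarrow>
           iminus n m f g \<delta> k \<le> i \<and> i \<le> iplus n m f g \<delta> k"
proof -
  define S where "S = {i. i \<le> k \<and> (i, k - i) \<in> relevant_set n m f g \<delta>}"
  have "finite S" unfolding S_def by auto
  moreover have "S \<noteq> {}"
    unfolding S_def using relevant_diagonal_nonempty[OF assms(3,4)] .
  ultimately have "Min S \<in> S" "Max S \<in> S" "(i \<in> S) \<longrightarrow> Min S \<le> i \<and> i \<le> Max S"
    by simp_all
  then show ?thesis
    using relevant_between_relevant[OF assms(1,2)] assms(5)
    unfolding iminus_def iplus_def S_def[symmetric] unfolding S_def by blast
qed

theorem mainTheorem13:
  fixes f g :: "nat \<Rightarrow> rat" and n m :: nat and \<delta> :: rat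
  assumes "convex_on_range n f" and "convex_on_range m g" and "\<delta> \<ge> 0"
  shows "relevant_set n m f g \<delta> =
           {(i, k - i) | i k. k \<le> n + m \<and> i \<le> k \<and>
              iminus n m f g \<delta> k \<le> i \<and> i \<le> iplus n m f g \<delta> k}"
    (is "?R = ?P")
proof (rule set_eqI, rule iffI)
  fix x assume "x \<in> ?R"
  moreover obtain i j where x: "x = (i, j)" by fastforce
  ultimately have "(i, i + j - i) \<in> ?R" "i + j \<le> n + m"
    unfolding relevant_set_def by auto
  with relevant_diagonal_iff[OF assms, of "i + j" i] x show "x \<in> ?P" by force
next
  fix x assume "x \<in> ?P"
  with relevant_diagonal_iff[OF assms] show "x \<in> ?R" by blast
qed

end
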